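(* Let $p=p_n$ depend on $n$, and suppose that under the true measure $\mathbb{P}_0$ the observations $Y_1,\dots,Y_n\in\mathbb{R}^{p_n}$ are i.i.d., mean zero, with covariance $\Sigma_0=\Sigma_{0n}$ and precision matrix $\Omega_0=\Sigma_0^{-1}$, where there are constants $k_\sigma\in(0,1]$, $\sigma_0>0$ independent of $n$ with $k_\sigma\le\lambda_{\min}(\Sigma_0)\le\lambda_{\max}(\Sigma_0)\le1/k_\sigma$ and the sub-Gaussian norm of $\Sigma_0^{-1/2}Y_1$ at most $\sigma_0$. Consider a working Bayesian model $Y_i$ i.i.d. $N_p(0,\Sigma)$ with a prior on $\Sigma$, and suppose that for some sequence $\epsilon_n\to0$, $\Pi_n(\|\Sigma-\Sigma_0\|>\epsilon_n\mid Y_1,\dots,Y_n)\to0$ in $\mathbb{P}_0$-probability. Then the induced posterior on $\Omega=\Sigma^{-1}$ contracts around $\Omega_0$ at rate $\epsilon_n$, i.e. $\Pi_n(\|\Omega-\Omega_0\|>\epsilon_n\mid Y_1,\dots,Y_n)\to0$ in $\mathbb{P}_0$-probability.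
   Context: $\|\cdot\|$ is the spectral norm; the sub-Gaussian norm of a mean-zero random vector $X$ is $\sup_{\|u\|=1}\sup_{q\ge1}q^{-1/2}(E|u^TX|^q)^{1/q}$. $\Pi_n(\cdot\mid Y_1,\dots,Y_n)$ denotes the posterior distribution. *)

theory Defs
  imports "HOL-Probability.Probability"
    "Jordan_Normal_Form.Determinant"
    "Jordan_Normal_Form.Char_Poly"
    "Jordan_Normal_Form.Gauss_Jordan_Elimination"
begin

text \<open>Observations in R^p are represented as extensional functions in
  PiE {..<p} UNIV (the space of the product measure); covariance parameters
  Sigma (p x p matrices) as extensional functions on {..<p} x {..<p}.\<close>

definition obs_space :: "nat \<Rightarrow> (nat \<Rightarrow> real) measure" where
  "obs_space p = Pi\<^sub>M {..<p} (\<lambda>_. borel)"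

definition param_space :: "nat \<Rightarrow> (nat \<times> nat \<Rightarrow> real) measure" where
  "param_space p = Pi\<^sub>M ({..<p} \<times> {..<p}) (\<lambda>_. borel)"

definition to_vec :: "nat \<Rightarrow> (nat \<Rightarrow> real) \<Rightarrow> real Matrix.vec" where
  "to_vec p y = Matrix.vec p y"

definition to_mat :: "nat \<Rightarrow> (nat \<times> nat \<Rightarrow> real) \<Rightarrow> real Matrix.mat" where
  "to_mat p S = Matrix.mat p p S"

definition vnorm :: "real Matrix.vec \<Rightarrow> real" where
  "vnorm v = sqrt (\<Sum>i<dim_vec v. (v $ i)^2)"

definition spec_norm :: "real Matrix.mat \<Rightarrow> real" where
  "spec_norm A = Sup {vnorm (A *\<^sub>v x) | x. x \<in> carrier_vec (dim_col A) \<and> vnorm x \<le> 1}"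

definition mat_inv :: "real Matrix.mat \<Rightarrow> real Matrix.mat" where
  "mat_inv A = the (mat_inverse A)"

definition pos_def_mat :: "real Matrix.mat \<Rightarrow> bool" where
  "pos_def_mat A \<longleftrightarrow> A \<in> carrier_mat (dim_row A) (dim_row A) \<and> transpose_mat A = A \<and>
     (\<forall>x \<in> carrier_vec (dim_row A). x \<noteq> 0\<^sub>v (dim_row A) \<longrightarrow> scalar_prod x (A *\<^sub>v x) > 0)"

definition inv_sqrt_mat :: "real Matrix.mat \<Rightarrow> real Matrix.mat" where
  "inv_sqrt_mat A = (SOME R. R \<in> carrier_mat (dim_row A) (dim_row A) \<and> pos_def_mat R \<and>
     R * R = mat_inv A)"

text \<open>Sub-Gaussian norm of a (mean-zero) random vector X in R^p is at most s:
  sup_{|u|=1} sup_{q>=1} q^{-1/2} (E|u^T X|^q)^{1/q} <= s, written out pointwise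
  as E|u^T X|^q <= (s * sqrt q)^q.\<close>
definition subgauss_norm_le :: "nat \<Rightarrow> 'a measure \<Rightarrow> ('a \<Rightarrow> real Matrix.vec) \<Rightarrow> real \<Rightarrow> bool" where
  "subgauss_norm_le p M X s \<longleftrightarrow>
     (\<forall>u \<in> carrier_vec p. vnorm u = 1 \<longrightarrow> (\<forall>q::real. q \<ge> 1 \<longrightarrow>
        (\<integral>\<^sup>+\<omega>. ennreal (\<bar>scalar_prod u (X \<omega>)\<bar> powr q) \<partial>M) \<le> ennreal ((s * sqrt q) powr q)))"

definition gauss_dens :: "nat \<Rightarrow> real Matrix.mat \<Rightarrow> real Matrix.vec \<Rightarrow> real" where
  "gauss_dens p S y = (2 * pi) powr (- real p / 2) * (Determinant.det S) powr (-1/2) *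
     exp (- (1/2) * scalar_prod y (mat_inv S *\<^sub>v y))"

definition likelihood :: "nat \<Rightarrow> nat \<Rightarrow> (nat \<Rightarrow> nat \<Rightarrow> real) \<Rightarrow> (nat \<times> nat \<Rightarrow> real) \<Rightarrow> real" where
  "likelihood p n ys S = (\<Prod>i<n. gauss_dens p (to_mat p S) (to_vec p (ys i)))"

definition posterior :: "nat \<Rightarrow> nat \<Rightarrow> (nat \<times> nat \<Rightarrow> real) measure \<Rightarrow> (nat \<Rightarrow> nat \<Rightarrow> real)
    \<Rightarrow> (nat \<times> nat \<Rightarrow> real) set \<Rightarrow> real" where
  "posterior p n mu ys A = enn2real
     ((\<integral>\<^sup>+S\<in>A. ennreal (likelihood p n ys S) \<partial>mu) / (\<integral>\<^sup>+S. ennreal (likelihood p n ys S) \<partial>mu))"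

definition to_zero_in_prob :: "(nat \<Rightarrow> 'a measure) \<Rightarrow> (nat \<Rightarrow> 'a \<Rightarrow> real) \<Rightarrow> bool" where
  "to_zero_in_prob M Z \<longleftrightarrow>
     (\<forall>\<delta>>0. (\<lambda>n. measure (M n) {\<omega> \<in> space (M n). \<bar>Z n \<omega>\<bar> > \<delta>}) \<longlonglongrightarrow> 0)"

end

theory Submission
  imports Defs
begin

text \<open>For \<open>\<parallel>\<Sigma> - \<Sigma>\<^sub>0\<parallel> \<le> \<epsilon> \<le> k/2\<close>, where \<open>\<parallel>\<Sigma>\<^sub>0 x\<parallel> \<ge> k \<parallel>x\<parallel>\<close> because the symmetric
  matrix \<open>\<Sigma>\<^sub>0\<close> has all eigenvalues \<open>\<ge> k\<close>, the identity
  \<open>\<Sigma>\<inverse> - \<Sigma>\<^sub>0\<inverse> = \<Sigma>\<inverse> (\<Sigma>\<^sub>0 - \<Sigma>) \<Sigma>\<^sub>0\<inverse>\<close> gives \<open>\<parallel>\<Sigma>\<inverse> - \<Sigma>\<^sub>0\<inverse>\<parallel> \<le> 2\<epsilon>/k\<^sup>2\<close>.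
  So once \<open>\<epsilon>\<^sub>n \<le> k/2\<close>, the event \<open>\<parallel>\<Omega> - \<Omega>\<^sub>0\<parallel> > C \<epsilon>\<^sub>n\<close> with \<open>C = 2/k\<^sup>2\<close> is contained in
  \<open>\<parallel>\<Sigma> - \<Sigma>\<^sub>0\<parallel> > \<epsilon>\<^sub>n\<close>, and the posterior probabilities, being monotone in the event and
  measurable in the data, inherit the convergence to zero in probability.\<close>

unbundle no vec_syntax

section \<open>Euclidean norm and spectral norm\<close>

lemma vnorm_eq_L2_set: "vnorm v = L2_set (\<lambda>i. v $ i) {..<dim_vec v}"
  unfolding vnorm_def L2_set_def by simp

lemma vnorm_nonneg: "0 \<le> vnorm v"
  unfolding vnorm_def by (simp add: sum_nonneg)

lemma vnorm_zero_vec [simp]: "vnorm (0\<^sub>v n) = 0"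
  unfolding vnorm_def by simp

lemma power2_vnorm: "(vnorm v)\<^sup>2 = v \<bullet> v"
  unfolding vnorm_def scalar_prod_def by (simp add: sum_nonneg power2_eq_square atLeast0LessThan)

lemma vnorm_smult: "vnorm (c \<cdot>\<^sub>v x) = \<bar>c\<bar> * vnorm x"
proof -
  have "\<bar>c\<bar> * vnorm x = L2_set (\<lambda>i. \<bar>c\<bar> * x $ i) {..<dim_vec x}"
    by (simp add: vnorm_eq_L2_set L2_set_right_distrib)
  also have "\<dots> = vnorm (c \<cdot>\<^sub>v x)"
    unfolding vnorm_eq_L2_set L2_set_def by (auto intro!: arg_cong[where f=sqrt] sum.cong simp: power_mult_distrib)
  finally show ?thesis by simp
qed

lemma vnorm_eq_0_imp: assumes "x \<in> carrier_vec n" "vnorm x = 0" shows "x = 0\<^sub>v n"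
proof -
  have "\<forall>i\<in>{..<n}. x $ i = 0"
    using assms L2_set_eq_0_iff[of "{..<n}" "\<lambda>i. x $ i"] by (simp add: vnorm_eq_L2_set)
  then show ?thesis using assms by (intro eq_vecI) auto
qed

lemma vnorm_pos: assumes "x \<in> carrier_vec n" "x \<noteq> 0\<^sub>v n" shows "0 < vnorm x"
  using vnorm_eq_0_imp[OF assms(1)] assms(2) vnorm_nonneg[of x] by fastforce

lemma abs_scalar_prod_le_vnorm:
  assumes "x \<in> carrier_vec n" "y \<in> carrier_vec n"
  shows "\<bar>x \<bullet> y\<bar> \<le> vnorm x * vnorm y"
proof -
  have "\<bar>x \<bullet> y\<bar> \<le> (\<Sum>i<n. \<bar>x $ i\<bar> * \<bar>y $ i\<bar>)"
    using assms unfolding scalar_prod_def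
    by (auto simp: atLeast0LessThan abs_mult intro: order_trans[OF sum_abs])
  also have "\<dots> \<le> vnorm x * vnorm y"
    using L2_set_mult_ineq[of "\<lambda>i. x $ i" "\<lambda>i. y $ i" "{..<n}"] assms by (simp add: vnorm_eq_L2_set)
  finally show ?thesis .
qed

lemma vnorm_diff_ge:
  assumes "x \<in> carrier_vec n" "y \<in> carrier_vec n"
  shows "vnorm x - vnorm y \<le> vnorm (x - y)"
proof -
  have "vnorm x = L2_set (\<lambda>i. (x - y) $ i + y $ i) {..<n}"
    using assms by (auto simp: vnorm_eq_L2_set intro!: L2_set_cong)
  then show ?thesis
    using L2_set_triangle_ineq[of "\<lambda>i. (x - y) $ i" "\<lambda>i. y $ i" "{..<n}"] assms by (simp add: vnorm_eq_L2_set)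
qed

lemma vnorm_minus_commute:
  assumes "x \<in> carrier_vec n" "y \<in> carrier_vec n"
  shows "vnorm (x - y) = vnorm (y - x)"
  using assms unfolding vnorm_def by (auto simp: power2_commute intro!: arg_cong[where f=sqrt] sum.cong)

lemma mult_mat_vec_bounded:
  assumes A: "A \<in> carrier_mat n m"
  shows "\<exists>F>0. \<forall>x\<in>carrier_vec m. vnorm (A *\<^sub>v x) \<le> F * vnorm x"
proof (intro exI conjI ballI)
  let ?F = "L2_set (\<lambda>i. vnorm (row A i)) {..<n} + 1"
  show "0 < ?F" using L2_set_nonneg[of "\<lambda>i. vnorm (row A i)" "{..<n}"] by linarith
  fix x :: "real vec" assume x: "x \<in> carrier_vec m"
  have "vnorm (A *\<^sub>v x) = L2_set (\<lambda>i. \<bar>row A i \<bullet> x\<bar>) {..<n}"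
    using A x by (auto simp: vnorm_eq_L2_set L2_set_def)
  also have "\<dots> \<le> L2_set (\<lambda>i. vnorm (row A i) * vnorm x) {..<n}"
    using A x by (intro L2_set_mono abs_scalar_prod_le_vnorm) auto
  also have "\<dots> \<le> ?F * vnorm x"
    by (simp add: L2_set_left_distrib vnorm_nonneg distrib_right)
  finally show "vnorm (A *\<^sub>v x) \<le> ?F * vnorm x" .
qed

lemma spec_norm_le_iff:
  assumes A: "A \<in> carrier_mat n m"
  shows "spec_norm A \<le> c \<longleftrightarrow> (\<forall>x\<in>carrier_vec m. vnorm x \<le> 1 \<longrightarrow> vnorm (A *\<^sub>v x) \<le> c)"
proof -
  let ?V = "{vnorm (A *\<^sub>v x) | x. x \<in> carrier_vec (dim_col A) \<and> vnorm x \<le> 1}"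
  obtain F where F: "F > 0" "\<forall>x\<in>carrier_vec m. vnorm (A *\<^sub>v x) \<le> F * vnorm x"
    using mult_mat_vec_bounded[OF A] by blast
  have "bdd_above ?V"
  proof (rule bdd_aboveI[where M=F], clarify)
    fix x :: "real vec" assume x: "x \<in> carrier_vec (dim_col A)" "vnorm x \<le> 1"
    then have "vnorm (A *\<^sub>v x) \<le> F * vnorm x" using F A by auto
    also have "\<dots> \<le> F" using F x by (simp add: mult_left_le)
    finally show "vnorm (A *\<^sub>v x) \<le> F" .
  qed
  moreover have "vnorm (A *\<^sub>v 0\<^sub>v m) \<in> ?V"
    using A by (intro CollectI exI[of _ "0\<^sub>v m"]) simp
  then have "?V \<noteq> {}" by blast
  ultimately have "spec_norm A \<le> c \<longleftrightarrow> (\<forall>v\<in>?V. v \<le> c)"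
    unfolding spec_norm_def by (rule cSup_le_iff[rotated])
  also have "\<dots> \<longleftrightarrow> (\<forall>x\<in>carrier_vec m. vnorm x \<le> 1 \<longrightarrow> vnorm (A *\<^sub>v x) \<le> c)"
    using A by blast
  finally show ?thesis .
qed

lemma spec_norm_nonneg: assumes A: "A \<in> carrier_mat n m" shows "0 \<le> spec_norm A"
proof -
  have "vnorm (A *\<^sub>v 0\<^sub>v m) \<le> spec_norm A"
    using spec_norm_le_iff[OF A, of "spec_norm A"] by simp
  moreover have "A *\<^sub>v 0\<^sub>v m = 0\<^sub>v n" using A by auto
  ultimately show ?thesis by simp
qed

lemma vnorm_mult_mat_vec_le:
  assumes A: "A \<in> carrier_mat n m" and x: "x \<in> carrier_vec m"
  shows "vnorm (A *\<^sub>v x) \<le> spec_norm A * vnorm x"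
proof (cases "x = 0\<^sub>v m")
  case True
  moreover have "A *\<^sub>v 0\<^sub>v m = 0\<^sub>v n" using A by auto
  ultimately show ?thesis by simp
next
  case False
  then have pos: "0 < vnorm x" using vnorm_pos[OF x] by blast
  have "vnorm (A *\<^sub>v ((1 / vnorm x) \<cdot>\<^sub>v x)) \<le> spec_norm A"
    using spec_norm_le_iff[OF A, of "spec_norm A"] x pos by (simp add: vnorm_smult)
  then show ?thesis
    using pos by (simp add: mult_mat_vec[OF A x] vnorm_smult divide_le_eq mult.commute)
qed

lemma spec_norm_leI:
  assumes A: "A \<in> carrier_mat n m" and c: "0 \<le> c"
    and bound: "\<And>x. x \<in> carrier_vec m \<Longrightarrow> vnorm (A *\<^sub>v x) \<le> c * vnorm x"
  shows "spec_norm A \<le> c"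
  unfolding spec_norm_le_iff[OF A] using bound c by (meson mult_left_le order_trans)

section \<open>Perturbation of the inverse\<close>

lemma mat_inv_det_nonzero:
  fixes A :: "real mat"
  assumes A: "A \<in> carrier_mat n n" and d: "Determinant.det A \<noteq> 0"
  shows "mat_inv A \<in> carrier_mat n n" "mat_inv A * A = 1\<^sub>m n" "A * mat_inv A = 1\<^sub>m n"
proof -
  have "A \<in> Units (ring_mat TYPE(real) n ())" by (rule det_non_zero_imp_unit[OF A d])
  then obtain B where B: "mat_inverse A = Some B"
    using mat_inverse(1)[OF A] by (cases "mat_inverse A") force+
  then have "mat_inv A = B" unfolding mat_inv_def by simp
  then show "mat_inv A \<in> carrier_mat n n" "mat_inv A * A = 1\<^sub>m n" "A * mat_inv A = 1\<^sub>m n"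
    using mat_inverse(2)[OF A B] by simp_all
qed

lemma det_nonzero_if_bounded_below:
  fixes A :: "real mat"
  assumes A: "A \<in> carrier_mat n n" and c: "0 < c"
    and below: "\<And>x. x \<in> carrier_vec n \<Longrightarrow> c * vnorm x \<le> vnorm (A *\<^sub>v x)"
  shows "Determinant.det A \<noteq> 0"
proof
  assume "Determinant.det A = 0"
  then obtain v where v: "v \<in> carrier_vec n" "v \<noteq> 0\<^sub>v n" "A *\<^sub>v v = 0\<^sub>v n"
    using det_0_iff_vec_prod_zero[OF A] by blast
  have "c * vnorm v \<le> 0" using below[OF v(1)] v(3) by simp
  then show False using vnorm_pos[OF v(1,2)] c by (simp add: mult_le_0_iff)
qed

lemma vnorm_mat_inv_le:
  fixes A :: "real mat"
  assumes A: "A \<in> carrier_mat n n" and c: "0 < c"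
    and below: "\<And>x. x \<in> carrier_vec n \<Longrightarrow> c * vnorm x \<le> vnorm (A *\<^sub>v x)"
    and y: "y \<in> carrier_vec n"
  shows "vnorm (mat_inv A *\<^sub>v y) \<le> vnorm y / c"
proof -
  note inv = mat_inv_det_nonzero[OF A det_nonzero_if_bounded_below[OF A c below]]
  have "A *\<^sub>v (mat_inv A *\<^sub>v y) = y"
    using assoc_mult_mat_vec[OF A inv(1) y] inv(3) y by simp
  then have "c * vnorm (mat_inv A *\<^sub>v y) \<le> vnorm y"
    using below[of "mat_inv A *\<^sub>v y"] inv(1) y by simp
  then show ?thesis using c by (simp add: le_divide_eq mult.commute)
qed

text \<open>\<open>S\<close> inherits the lower bound \<open>k/2\<close> from \<open>T\<close>, and then
  \<open>S\<inverse> - T\<inverse> = S\<inverse> (T - S) T\<inverse>\<close> gives the bound.\<close>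
lemma spec_norm_mat_inv_diff_le:
  fixes S T :: "real mat"
  assumes S: "S \<in> carrier_mat n n" and T: "T \<in> carrier_mat n n" and k: "0 < k"
    and below: "\<And>x. x \<in> carrier_vec n \<Longrightarrow> k * vnorm x \<le> vnorm (T *\<^sub>v x)"
    and e: "spec_norm (S - T) \<le> e" and ek: "e \<le> k / 2"
  shows "spec_norm (mat_inv S - mat_inv T) \<le> 2 / k\<^sup>2 * e"
proof -
  have ST: "S - T \<in> carrier_mat n n" using S T by (simp add: minus_carrier_mat)
  have e0: "0 \<le> e" using spec_norm_nonneg[OF ST] e by linarith
  have close: "vnorm (S *\<^sub>v x - T *\<^sub>v x) \<le> e * vnorm x" if x: "x \<in> carrier_vec n" for x
    using vnorm_mult_mat_vec_le[OF ST x] mult_right_mono[OF e vnorm_nonneg[of x]]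
    by (simp add: minus_mult_distrib_mat_vec[OF S T x])
  have belowS: "k / 2 * vnorm x \<le> vnorm (S *\<^sub>v x)" if x: "x \<in> carrier_vec n" for x
  proof -
    have "vnorm (T *\<^sub>v x) - vnorm (S *\<^sub>v x) \<le> vnorm (S *\<^sub>v x - T *\<^sub>v x)"
      using vnorm_diff_ge[of "T *\<^sub>v x" n "S *\<^sub>v x"] vnorm_minus_commute[of "T *\<^sub>v x" n "S *\<^sub>v x"] S T x
      by simp
    then show ?thesis
      using close[OF x] below[OF x] mult_right_mono[OF ek vnorm_nonneg[of x]] by linarith
  qed
  have k2: "0 < k / 2" using k by simp
  note invS = mat_inv_det_nonzero[OF S det_nonzero_if_bounded_below[OF S k2 belowS]]
  note invT = mat_inv_det_nonzero[OF T det_nonzero_if_bounded_below[OF T k below]]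
  show ?thesis
  proof (rule spec_norm_leI)
    show "mat_inv S - mat_inv T \<in> carrier_mat n n" using invS(1) invT(1) by (simp add: minus_carrier_mat)
    show "0 \<le> 2 / k\<^sup>2 * e" using e0 by simp
    fix y :: "real vec" assume y: "y \<in> carrier_vec n"
    define z where "z = mat_inv T *\<^sub>v y"
    have z: "z \<in> carrier_vec n" using invT(1) y by (simp add: z_def)
    have "(mat_inv S - mat_inv T) *\<^sub>v y = mat_inv S *\<^sub>v y - mat_inv S *\<^sub>v (S *\<^sub>v z)"
      using minus_mult_distrib_mat_vec[OF invS(1) invT(1) y] assoc_mult_mat_vec[OF invS(1) S z] invS(2) z
      by (simp add: z_def)
    also have "\<dots> = mat_inv S *\<^sub>v (T *\<^sub>v z - S *\<^sub>v z)"
      using mult_minus_distrib_mat_vec[OF invS(1), of y "S *\<^sub>v z"] assoc_mult_mat_vec[OF T invT(1) y]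
        invT(3) y z S by (simp add: z_def)
    finally have "vnorm ((mat_inv S - mat_inv T) *\<^sub>v y) \<le> vnorm (T *\<^sub>v z - S *\<^sub>v z) / (k / 2)"
      using vnorm_mat_inv_le[OF S k2 belowS, of "T *\<^sub>v z - S *\<^sub>v z"] T S z by simp
    also have "\<dots> \<le> e * vnorm z / (k / 2)"
      using close[OF z] vnorm_minus_commute[of "T *\<^sub>v z" n "S *\<^sub>v z"] T S z k by (simp add: divide_right_mono)
    also have "\<dots> \<le> e * (vnorm y / k) / (k / 2)"
      using vnorm_mat_inv_le[OF T k below y] e0 k
      by (intro divide_right_mono mult_left_mono) (simp_all add: z_def)
    also have "\<dots> = 2 / k\<^sup>2 * e * vnorm y" by (simp add: power2_eq_square)
    finally show "vnorm ((mat_inv S - mat_inv T) *\<^sub>v y) \<le> 2 / k\<^sup>2 * e * vnorm y" .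
  qed
qed

section \<open>Symmetric matrices with eigenvalues bounded below\<close>

lemma scalar_prod_mult_mat_vec_sym:
  fixes A :: "real mat"
  assumes A: "A \<in> carrier_mat n n" and sym: "transpose_mat A = A"
    and x: "x \<in> carrier_vec n" and y: "y \<in> carrier_vec n"
  shows "x \<bullet> (A *\<^sub>v y) = (A *\<^sub>v x) \<bullet> y"
  using transpose_vec_mult_scalar[OF A y x] sym by simp

lemma quadratic_form_smult:
  fixes A :: "real mat"
  assumes A: "A \<in> carrier_mat n n" and z: "z \<in> carrier_vec n"
  shows "(c \<cdot>\<^sub>v z) \<bullet> (A *\<^sub>v (c \<cdot>\<^sub>v z)) = c\<^sup>2 * (z \<bullet> (A *\<^sub>v z))"
  using A z by (simp add: mult_mat_vec[OF A z] power2_eq_square)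

lemma quadratic_form_ge_if_unit:
  fixes A :: "real mat"
  assumes A: "A \<in> carrier_mat n n"
    and unit: "\<And>u. u \<in> carrier_vec n \<Longrightarrow> vnorm u = 1 \<Longrightarrow> m \<le> u \<bullet> (A *\<^sub>v u)"
    and z: "z \<in> carrier_vec n"
  shows "m * (z \<bullet> z) \<le> z \<bullet> (A *\<^sub>v z)"
proof (cases "z = 0\<^sub>v n")
  case True
  then show ?thesis using A by simp
next
  case False
  then have r: "0 < vnorm z" using vnorm_pos[OF z] by blast
  have "m \<le> ((1 / vnorm z) \<cdot>\<^sub>v z) \<bullet> (A *\<^sub>v ((1 / vnorm z) \<cdot>\<^sub>v z))"
    using unit z r by (simp add: vnorm_smult)
  also have "\<dots> = (z \<bullet> (A *\<^sub>v z)) / (z \<bullet> z)"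
    by (simp add: quadratic_form_smult[OF A z] power2_vnorm[symmetric] power_divide)
  finally show ?thesis
    using r by (simp add: power2_vnorm[symmetric] le_divide_eq)
qed

text \<open>Expand \<open>0 \<le> (x - s B x) \<bullet> B (x - s B x)\<close> with \<open>s = 1 / D\<close>.\<close>
lemma psd_vnorm_mult_square_le:
  fixes B :: "real mat"
  assumes B: "B \<in> carrier_mat n n"
    and sym: "\<And>x y. x \<in> carrier_vec n \<Longrightarrow> y \<in> carrier_vec n \<Longrightarrow> x \<bullet> (B *\<^sub>v y) = (B *\<^sub>v x) \<bullet> y"
    and psd: "\<And>x. x \<in> carrier_vec n \<Longrightarrow> 0 \<le> x \<bullet> (B *\<^sub>v x)"
    and D: "0 < D" and bound: "\<And>x. x \<in> carrier_vec n \<Longrightarrow> vnorm (B *\<^sub>v x) \<le> D * vnorm x"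
    and x: "x \<in> carrier_vec n"
  shows "(vnorm (B *\<^sub>v x))\<^sup>2 \<le> D * (x \<bullet> (B *\<^sub>v x))"
proof -
  define y where "y = B *\<^sub>v x"
  define s where "s = 1 / D"
  have y: "y \<in> carrier_vec n" and By: "B *\<^sub>v y \<in> carrier_vec n" using B x by (simp_all add: y_def)
  have "B *\<^sub>v (x - s \<cdot>\<^sub>v y) = y - s \<cdot>\<^sub>v (B *\<^sub>v y)"
    using mult_minus_distrib_mat_vec[OF B x, of "s \<cdot>\<^sub>v y"] mult_mat_vec[OF B y] y by (simp add: y_def)
  then have "(x - s \<cdot>\<^sub>v y) \<bullet> (B *\<^sub>v (x - s \<cdot>\<^sub>v y))
      = x \<bullet> y - s * (x \<bullet> (B *\<^sub>v y)) - (s * (y \<bullet> y) - s * s * (y \<bullet> (B *\<^sub>v y)))"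
    using x y By
    by (simp add: minus_scalar_prod_distrib[of x n "s \<cdot>\<^sub>v y"] scalar_prod_minus_distrib[of _ n y]
        scalar_prod_minus_distrib[of x n y])
  also have "x \<bullet> (B *\<^sub>v y) = y \<bullet> y" using sym[OF x y] by (simp add: y_def)
  finally have "0 \<le> x \<bullet> y - 2 * s * (y \<bullet> y) + s * s * (y \<bullet> (B *\<^sub>v y))"
    using psd[of "x - s \<cdot>\<^sub>v y"] x y by simp
  moreover have "y \<bullet> (B *\<^sub>v y) \<le> D * (y \<bullet> y)"
  proof -
    have "y \<bullet> (B *\<^sub>v y) \<le> vnorm y * vnorm (B *\<^sub>v y)"
      using abs_scalar_prod_le_vnorm[OF y By] by linarith
    also have "\<dots> \<le> vnorm y * (D * vnorm y)" by (rule mult_left_mono[OF bound[OF y] vnorm_nonneg])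
    finally show ?thesis by (simp add: power2_vnorm[symmetric] power2_eq_square algebra_simps)
  qed
  then have "s * s * (y \<bullet> (B *\<^sub>v y)) \<le> s * (y \<bullet> y)"
    using D mult_left_mono[of "y \<bullet> (B *\<^sub>v y)" "D * (y \<bullet> y)" "s * s"] by (simp add: s_def)
  ultimately have "s * (y \<bullet> y) \<le> x \<bullet> y" by linarith
  then show ?thesis using D by (simp add: s_def y_def power2_vnorm field_simps)
qed

lemma psd_quadratic_form_bounded_below:
  fixes B :: "real mat"
  assumes B: "B \<in> carrier_mat n n" and det: "Determinant.det B \<noteq> 0"
    and sym: "\<And>x y. x \<in> carrier_vec n \<Longrightarrow> y \<in> carrier_vec n \<Longrightarrow> x \<bullet> (B *\<^sub>v y) = (B *\<^sub>v x) \<bullet> y"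
    and psd: "\<And>x. x \<in> carrier_vec n \<Longrightarrow> 0 \<le> x \<bullet> (B *\<^sub>v x)"
  shows "\<exists>\<eta>>0. \<forall>u\<in>carrier_vec n. vnorm u = 1 \<longrightarrow> \<eta> \<le> u \<bullet> (B *\<^sub>v u)"
proof -
  note inv = mat_inv_det_nonzero[OF B det]
  obtain G where G: "0 < G" "\<And>z. z \<in> carrier_vec n \<Longrightarrow> vnorm (mat_inv B *\<^sub>v z) \<le> G * vnorm z"
    using mult_mat_vec_bounded[OF inv(1)] by blast
  obtain D where D: "0 < D" "\<And>z. z \<in> carrier_vec n \<Longrightarrow> vnorm (B *\<^sub>v z) \<le> D * vnorm z"
    using mult_mat_vec_bounded[OF B] by blast
  have "1 / (G\<^sup>2 * D) \<le> u \<bullet> (B *\<^sub>v u)" if u: "u \<in> carrier_vec n" "vnorm u = 1" for u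
  proof -
    have "u = mat_inv B *\<^sub>v (B *\<^sub>v u)" using assoc_mult_mat_vec[OF inv(1) B u(1)] inv(2) u by simp
    then have "1 \<le> G * vnorm (B *\<^sub>v u)" using G(2)[of "B *\<^sub>v u"] B u by simp
    then have "1 \<le> G\<^sup>2 * (vnorm (B *\<^sub>v u))\<^sup>2"
      by (metis one_le_power power_mult_distrib)
    also have "\<dots> \<le> G\<^sup>2 * (D * (u \<bullet> (B *\<^sub>v u)))"
      using psd_vnorm_mult_square_le[OF B sym psd D u(1)] by (simp add: mult_left_mono)
    finally have "1 \<le> (G\<^sup>2 * D) * (u \<bullet> (B *\<^sub>v u))" by (simp add: mult.assoc)
    then show ?thesis using G(1) D(1) by (simp add: divide_le_eq mult.commute)
  qed
  then show ?thesis using G(1) D(1) by (intro exI[of _ "1 / (G\<^sup>2 * D)"]) auto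
qed

text \<open>The infimum \<open>m\<close> of the quadratic form on the unit sphere is an eigenvalue, without a
  compactness argument: \<open>A - m I\<close> is positive semidefinite, and were it nonsingular its quadratic
  form would be bounded below on the unit sphere by some \<open>\<eta> > 0\<close>, contradicting the choice of
  \<open>m\<close> as an infimum.\<close>
lemma eigenvalue_le_quadratic_form:
  fixes A :: "real mat"
  assumes A: "A \<in> carrier_mat n n" and sym: "transpose_mat A = A" and n: "0 < n"
  shows "\<exists>m. eigenvalue A m \<and> (\<forall>u\<in>carrier_vec n. vnorm u = 1 \<longrightarrow> m \<le> u \<bullet> (A *\<^sub>v u))"
proof -
  define sphere where "sphere = {u\<in>carrier_vec n. vnorm u = 1}"
  define m where "m = (INF u\<in>sphere. u \<bullet> (A *\<^sub>v u))"
  have "(\<Sum>i<n. (unit_vec n 0 $ i)\<^sup>2) = (\<Sum>i<n. if i = 0 then 1 else 0 :: real)"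
    by (intro sum.cong) (auto simp: unit_vec_def)
  then have "unit_vec n 0 \<in> sphere"
    using n unfolding sphere_def vnorm_def by simp
  then have sphere_ne: "sphere \<noteq> {}" by blast
  obtain F where F: "\<And>z. z \<in> carrier_vec n \<Longrightarrow> vnorm (A *\<^sub>v z) \<le> F * vnorm z"
    using mult_mat_vec_bounded[OF A] by blast
  have "bdd_below ((\<lambda>u. u \<bullet> (A *\<^sub>v u)) ` sphere)"
  proof (rule bdd_belowI2[where m="-F"])
    fix u assume u: "u \<in> sphere"
    have "\<bar>u \<bullet> (A *\<^sub>v u)\<bar> \<le> vnorm u * vnorm (A *\<^sub>v u)"
      using abs_scalar_prod_le_vnorm[of u n "A *\<^sub>v u"] u A by (simp add: sphere_def)
    also have "\<dots> \<le> F" using F[of u] u by (simp add: sphere_def)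
    finally show "- F \<le> u \<bullet> (A *\<^sub>v u)" by linarith
  qed
  then have m_le: "m \<le> u \<bullet> (A *\<^sub>v u)" if "u \<in> sphere" for u
    unfolding m_def using that by (rule cINF_lower)
  define B where "B = A - m \<cdot>\<^sub>m 1\<^sub>m n"
  have Bc: "B \<in> carrier_mat n n" using A by (simp add: B_def minus_carrier_mat)
  have Bv: "B *\<^sub>v z = A *\<^sub>v z - m \<cdot>\<^sub>v z" if z: "z \<in> carrier_vec n" for z
  proof -
    have "(m \<cdot>\<^sub>m 1\<^sub>m n) *\<^sub>v z = m \<cdot>\<^sub>v z"
      using z by (intro eq_vecI) (auto simp: scalar_prod_left_unit)
    then show ?thesis using minus_mult_distrib_mat_vec[OF A _ z, of "m \<cdot>\<^sub>m 1\<^sub>m n"] by (simp add: B_def)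
  qed
  have quadB: "z \<bullet> (B *\<^sub>v z) = z \<bullet> (A *\<^sub>v z) - m * (z \<bullet> z)" if z: "z \<in> carrier_vec n" for z
    using A z by (simp add: Bv scalar_prod_minus_distrib[of z n])
  have psd: "0 \<le> z \<bullet> (B *\<^sub>v z)" if z: "z \<in> carrier_vec n" for z
    using quadratic_form_ge_if_unit[OF A _ z, of m] m_le quadB[OF z] by (simp add: sphere_def)
  have "transpose_mat B = B"
    using A sym by (simp add: B_def transpose_minus) (intro eq_matI; auto)
  then have symB: "z \<bullet> (B *\<^sub>v w) = (B *\<^sub>v z) \<bullet> w" if "z \<in> carrier_vec n" "w \<in> carrier_vec n" for z w
    using scalar_prod_mult_mat_vec_sym[OF Bc _ that] by blast
  have "Determinant.det B = 0"
  proof (rule ccontr)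
    assume "Determinant.det B \<noteq> 0"
    then obtain \<eta> where \<eta>: "0 < \<eta>" "\<And>u. u \<in> sphere \<Longrightarrow> \<eta> \<le> u \<bullet> (B *\<^sub>v u)"
      using psd_quadratic_form_bounded_below[OF Bc _ symB psd] unfolding sphere_def by blast
    have "m + \<eta> \<le> m"
      unfolding m_def
    proof (rule cINF_greatest[OF sphere_ne])
      fix u assume u: "u \<in> sphere"
      then have "u \<bullet> u = 1" using power2_vnorm[of u] by (simp add: sphere_def)
      then show "(INF u\<in>sphere. u \<bullet> (A *\<^sub>v u)) + \<eta> \<le> u \<bullet> (A *\<^sub>v u)"
        using \<eta>(2)[OF u] quadB[of u] u by (simp add: sphere_def m_def)
    qed
    then show False using \<eta>(1) by simp
  qed
  then obtain v where v: "v \<in> carrier_vec n" "v \<noteq> 0\<^sub>v n" "B *\<^sub>v v = 0\<^sub>v n"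
    using det_0_iff_vec_prod_zero[OF Bc] by blast
  have "A *\<^sub>v v = m \<cdot>\<^sub>v v"
  proof (rule eq_vecI)
    fix i assume "i < dim_vec (m \<cdot>\<^sub>v v)"
    then have "i < n" using v by simp
    then have "(A *\<^sub>v v - m \<cdot>\<^sub>v v) $ i = 0" using Bv[OF v(1)] v(3) by (metis index_zero_vec(1))
    then show "(A *\<^sub>v v) $ i = (m \<cdot>\<^sub>v v) $ i" using A v \<open>i < n\<close> by simp
  qed (use A v in simp)
  then have "eigenvalue A m"
    using v A unfolding eigenvalue_def eigenvector_def by auto
  then show ?thesis using m_le unfolding sphere_def by blast
qed

lemma vnorm_mult_mat_vec_ge_if_eigenvalues_ge:
  fixes A :: "real mat"
  assumes A: "A \<in> carrier_mat n n" and sym: "transpose_mat A = A"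
    and eig: "\<And>ev. eigenvalue A ev \<Longrightarrow> k \<le> ev" and x: "x \<in> carrier_vec n"
  shows "k * vnorm x \<le> vnorm (A *\<^sub>v x)"
proof (cases "x = 0\<^sub>v n")
  case True
  then show ?thesis using A vnorm_nonneg by simp
next
  case False
  then have "0 < n" using x by (cases n) auto
  then obtain m where "eigenvalue A m" and m: "\<And>u. u \<in> carrier_vec n \<Longrightarrow> vnorm u = 1 \<Longrightarrow> m \<le> u \<bullet> (A *\<^sub>v u)"
    using eigenvalue_le_quadratic_form[OF A sym] by blast
  then have "\<And>u. u \<in> carrier_vec n \<Longrightarrow> vnorm u = 1 \<Longrightarrow> k \<le> u \<bullet> (A *\<^sub>v u)"
    using eig by (meson order_trans)
  then have "k * (vnorm x)\<^sup>2 \<le> x \<bullet> (A *\<^sub>v x)"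
    using quadratic_form_ge_if_unit[OF A _ x] by (simp add: power2_vnorm)
  also have "\<dots> \<le> vnorm x * vnorm (A *\<^sub>v x)"
    using abs_scalar_prod_le_vnorm[of x n "A *\<^sub>v x"] A x by simp
  finally show ?thesis
    using vnorm_pos[OF x False] by (simp add: power2_eq_square mult.assoc mult.commute[of k])
qed

lemma spec_norm_mat_inv_diff_le_if_eigenvalues_ge:
  fixes S T :: "real mat"
  assumes S: "S \<in> carrier_mat n n" and T: "T \<in> carrier_mat n n" and sym: "transpose_mat T = T"
    and k: "0 < k" and eig: "\<And>ev. eigenvalue T ev \<Longrightarrow> k \<le> ev"
    and e: "spec_norm (S - T) \<le> e" and ek: "e \<le> k / 2"
  shows "spec_norm (mat_inv S - mat_inv T) \<le> 2 / k\<^sup>2 * e"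
  using vnorm_mult_mat_vec_ge_if_eigenvalues_ge[OF T sym eig]
  by (rule spec_norm_mat_inv_diff_le[OF S T k _ e ek])

section \<open>Measurability and monotonicity of the posterior\<close>

lemma borel_measurable_det:
  fixes F :: "'x \<Rightarrow> nat \<times> nat \<Rightarrow> real"
  assumes F: "\<And>i j. i < d \<Longrightarrow> j < d \<Longrightarrow> (\<lambda>\<omega>. F \<omega> (i, j)) \<in> borel_measurable N"
  shows "(\<lambda>\<omega>. Determinant.det (mat d d (F \<omega>))) \<in> borel_measurable N"
proof -
  have "Determinant.det (mat d d (F \<omega>))
      = (\<Sum>p\<in>{p. p permutes {0..<d}}. signof p * (\<Prod>i=0..<d. F \<omega> (i, p i)))" for \<omega>
    unfolding det_def by (auto intro!: sum.cong prod.cong simp: permutes_in_image)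
  moreover have "(\<lambda>\<omega>. \<Sum>p\<in>{p. p permutes {0..<d}}. signof p * (\<Prod>i=0..<d. F \<omega> (i, p i)))
      \<in> borel_measurable N"
    by (auto intro!: borel_measurable_sum borel_measurable_times borel_measurable_prod F
        simp: permutes_in_image)
  ultimately show ?thesis by simp
qed

lemma adj_mat_mat_entry:
  assumes "a < n" "b < n"
  shows "adj_mat (mat n n f) $$ (a, b) = (-1) ^ (b + a) * Determinant.det (mat (n - 1) (n - 1)
     (\<lambda>(i, j). f (if i < b then i else Suc i, if j < a then j else Suc j)))"
proof -
  have "mat_delete (mat n n f) b a
      = mat (n - 1) (n - 1) (\<lambda>(i, j). f (if i < b then i else Suc i, if j < a then j else Suc j))"
    unfolding mat_delete_def using assms by (intro eq_matI) auto
  then show ?thesis unfolding adj_mat_def cofactor_def using assms by simp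
qed

lemma mat_inv_eq_adj_mat:
  fixes A :: "real mat"
  assumes A: "A \<in> carrier_mat n n" and d: "Determinant.det A \<noteq> 0"
  shows "mat_inv A = (1 / Determinant.det A) \<cdot>\<^sub>m adj_mat A"
proof -
  note inv = mat_inv_det_nonzero[OF A d]
  define X where "X = (1 / Determinant.det A) \<cdot>\<^sub>m adj_mat A"
  have X: "X \<in> carrier_mat n n" using adj_mat(1)[OF A] by (simp add: X_def)
  have "A * X = (1 / Determinant.det A) \<cdot>\<^sub>m (A * adj_mat A)"
    unfolding X_def by (rule mult_smult_distrib[OF A adj_mat(1)[OF A]])
  also have "\<dots> = 1\<^sub>m n" unfolding adj_mat(2)[OF A] using d by (intro eq_matI) auto
  finally have "mat_inv A = mat_inv A * (A * X)" using inv(1) by simp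
  also have "\<dots> = (mat_inv A * A) * X" using assoc_mult_mat[OF inv(1) A X] by simp
  also have "\<dots> = X" using inv(2) X by simp
  finally show ?thesis unfolding X_def .
qed

text \<open>Since \<open>mat_inv\<close> is computed by Gauss-Jordan elimination, the adjugate is what makes the
  density an explicit measurable expression in the entries of \<open>S\<close>. For singular \<open>S\<close> both sides
  vanish because \<open>0 powr a = 0\<close>, so the unspecified value of \<open>mat_inv\<close> plays no role.\<close>
lemma gauss_dens_eq_adj_mat:
  "gauss_dens n (to_mat n S) (to_vec n y) = (2 * pi) powr (- real n / 2) *
     Determinant.det (mat n n S) powr (-1/2) *
     exp (- (1/2) * ((\<Sum>a<n. \<Sum>b<n. y a * adj_mat (mat n n S) $$ (a, b) * y b) / Determinant.det (mat n n S)))"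
proof (cases "Determinant.det (mat n n S) = 0")
  case True
  then show ?thesis unfolding gauss_dens_def to_mat_def by simp
next
  case False
  have A: "mat n n S \<in> carrier_mat n n" by simp
  have "to_vec n y \<bullet> (mat_inv (mat n n S) *\<^sub>v to_vec n y)
      = (\<Sum>a<n. \<Sum>b<n. y a * adj_mat (mat n n S) $$ (a, b) * y b) / Determinant.det (mat n n S)"
    using adj_mat(1)[OF A]
    by (auto simp: mat_inv_eq_adj_mat[OF A False] to_vec_def scalar_prod_def atLeast0LessThan
        sum_divide_distrib sum_distrib_left ac_simps intro!: sum.cong)
  then show ?thesis unfolding gauss_dens_def to_mat_def by simp
qed

lemma borel_measurable_likelihood:
  fixes Y :: "nat \<Rightarrow> 'a \<Rightarrow> nat \<Rightarrow> real"
  assumes Y: "\<And>i. i < m \<Longrightarrow> Y i \<in> measurable N (obs_space n)"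
  shows "(\<lambda>z. likelihood n m (\<lambda>i. Y i (fst z)) (snd z)) \<in> borel_measurable (N \<Otimes>\<^sub>M param_space n)"
proof -
  let ?M = "N \<Otimes>\<^sub>M param_space n"
  have S: "(\<lambda>z. snd z (a, b)) \<in> borel_measurable ?M" if "a < n" "b < n" for a b
    using that unfolding param_space_def by (intro measurable_compose[OF measurable_snd]) auto
  have Yij: "(\<lambda>z. Y i (fst z) j) \<in> borel_measurable ?M" if "i < m" "j < n" for i j
    using measurable_compose[OF Y[OF that(1)], of "\<lambda>x. x j"] that(2)
    unfolding obs_space_def by (intro measurable_compose[OF measurable_fst]) auto
  define d where "d z = Determinant.det (mat n n (snd z))" for z :: "'a \<times> (nat \<times> nat \<Rightarrow> real)"
  have [measurable]: "d \<in> borel_measurable ?M"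
    unfolding d_def by (rule borel_measurable_det) (rule S)
  have adj: "(\<lambda>z. adj_mat (mat n n (snd z)) $$ (a, b)) \<in> borel_measurable ?M" if "a < n" "b < n" for a b
    using that by (simp add: adj_mat_mat_entry)
      (auto intro!: borel_measurable_times borel_measurable_const borel_measurable_det S)
  define q where "q i z = (\<Sum>a<n. \<Sum>b<n. Y i (fst z) a * adj_mat (mat n n (snd z)) $$ (a, b) * Y i (fst z) b)"
    for i z
  have [measurable]: "q i \<in> borel_measurable ?M" if "i < m" for i
    unfolding q_def using that by (auto intro!: borel_measurable_sum borel_measurable_times Yij adj)
  have "(\<lambda>z. gauss_dens n (to_mat n (snd z)) (to_vec n (Y i (fst z)))) \<in> borel_measurable ?M" if "i < m" for i
    using that by (simp add: gauss_dens_eq_adj_mat flip: d_def q_def) measurable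
  then show ?thesis unfolding likelihood_def by (auto intro!: borel_measurable_prod)
qed

lemma borel_measurable_posterior:
  assumes Y: "\<And>i. i < m \<Longrightarrow> Y i \<in> measurable N (obs_space n)"
    and prior: "prob_space \<mu>" "sets \<mu> = sets (param_space n)" and A: "A \<in> sets (param_space n)"
  shows "(\<lambda>\<omega>. posterior n m \<mu> (\<lambda>i. Y i \<omega>) A) \<in> borel_measurable N"
proof -
  interpret \<mu>: prob_space \<mu> by (rule prior(1))
  have [measurable]: "(\<lambda>z. likelihood n m (\<lambda>i. Y i (fst z)) (snd z)) \<in> borel_measurable (N \<Otimes>\<^sub>M \<mu>)"
    unfolding measurable_cong_sets[OF sets_pair_measure_cong[OF refl prior(2)] refl]
    by (rule borel_measurable_likelihood[OF Y])
  have [measurable]: "A \<in> sets \<mu>" using A prior(2) by simp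
  show ?thesis
    unfolding posterior_def by measurable
qed

lemma measurable_param_space_id: "(\<lambda>S. S) \<in> borel_measurable (param_space n)"
proof (rule measurable_coordinatewise_then_product)
  fix ij :: "nat \<times> nat"
  show "(\<lambda>S. S ij) \<in> borel_measurable (param_space n)"
  proof (cases "ij \<in> {..<n} \<times> {..<n}")
    case True
    then show ?thesis unfolding param_space_def by (intro measurable_component_singleton) auto
  next
    case False
    have "\<And>S. S \<in> space (param_space n) \<Longrightarrow> S ij = undefined"
      unfolding param_space_def space_PiM using PiE_arb False by blast
    then show ?thesis using measurable_cong[of "param_space n" "\<lambda>S. S ij" "\<lambda>S. undefined"] by simp
  qed
qed

lemma vnorm_mat_minus_mult_mat_vec:
  fixes C :: "real mat"
  assumes C: "C \<in> carrier_mat n n" and x: "x \<in> carrier_vec n"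
  shows "vnorm ((mat n n S - C) *\<^sub>v x) = sqrt (\<Sum>i<n. (\<Sum>j<n. (S (i, j) - C $$ (i, j)) * x $ j)\<^sup>2)"
  unfolding vnorm_def using C x
  by (auto simp: scalar_prod_def atLeast0LessThan intro!: sum.cong arg_cong[where f=sqrt])

lemma closed_spec_norm_le:
  fixes C :: "real mat"
  shows "closed {S :: nat \<times> nat \<Rightarrow> real. \<forall>x. x \<in> carrier_vec n \<and> vnorm x \<le> 1 \<longrightarrow>
     sqrt (\<Sum>i<n. (\<Sum>j<n. (S (i, j) - C $$ (i, j)) * x $ j)\<^sup>2) \<le> e}"
proof (rule closed_Collect_all)
  fix x :: "real vec"
  show "closed {S :: nat \<times> nat \<Rightarrow> real. x \<in> carrier_vec n \<and> vnorm x \<le> 1 \<longrightarrow>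
     sqrt (\<Sum>i<n. (\<Sum>j<n. (S (i, j) - C $$ (i, j)) * x $ j)\<^sup>2) \<le> e}"
  proof (cases "x \<in> carrier_vec n \<and> vnorm x \<le> 1")
    case True
    have "closed {S :: nat \<times> nat \<Rightarrow> real. sqrt (\<Sum>i<n. (\<Sum>j<n. (S (i, j) - C $$ (i, j)) * x $ j)\<^sup>2) \<le> e}"
      by (intro closed_Collect_le continuous_intros continuous_on_product_coordinates)
    then show ?thesis using True by simp
  next
    case False
    then show ?thesis by (simp del: de_Morgan_conj)
  qed
qed

lemma sets_spec_norm_gt:
  fixes C :: "real mat"
  assumes C: "C \<in> carrier_mat n n"
  shows "{S \<in> space (param_space n). e < spec_norm (to_mat n S - C)} \<in> sets (param_space n)"
proof -
  define K where "K = {S :: nat \<times> nat \<Rightarrow> real. \<forall>x. x \<in> carrier_vec n \<and> vnorm x \<le> 1 \<longrightarrow>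
     sqrt (\<Sum>i<n. (\<Sum>j<n. (S (i, j) - C $$ (i, j)) * x $ j)\<^sup>2) \<le> e}"
  have K: "(\<lambda>S. S) -` K \<inter> space (param_space n) \<in> sets (param_space n)"
    by (rule measurable_sets[OF measurable_param_space_id]) (simp add: K_def closed_spec_norm_le)
  have K_iff: "spec_norm (to_mat n S - C) \<le> e \<longleftrightarrow> S \<in> K" for S
  proof -
    have "mat n n S - C \<in> carrier_mat n n" using C by (simp add: minus_carrier_mat)
    from spec_norm_le_iff[OF this] show ?thesis
      unfolding to_mat_def K_def using vnorm_mat_minus_mult_mat_vec[OF C] by auto
  qed
  have "{S \<in> space (param_space n). e < spec_norm (to_mat n S - C)}
      = space (param_space n) - ((\<lambda>S. S) -` K \<inter> space (param_space n))"
    unfolding not_le[symmetric] K_iff by auto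
  then show ?thesis using K by simp
qed

lemma posterior_nonneg: "0 \<le> posterior n m \<mu> ys A"
  unfolding posterior_def by simp

lemma posterior_mono:
  assumes "B \<subseteq> A"
  shows "posterior n m \<mu> ys B \<le> posterior n m \<mu> ys A"
proof -
  define L where "L S = ennreal (likelihood n m ys S)" for S
  have BA: "(\<integral>\<^sup>+S\<in>B. L S \<partial>\<mu>) \<le> (\<integral>\<^sup>+S\<in>A. L S \<partial>\<mu>)"
    using assms by (intro nn_integral_mono) (auto simp: indicator_def)
  have "(\<integral>\<^sup>+S\<in>A. L S \<partial>\<mu>) \<le> (\<integral>\<^sup>+S. L S \<partial>\<mu>)"
    by (intro nn_integral_mono) (auto simp: indicator_def)
  then have "(\<integral>\<^sup>+S\<in>A. L S \<partial>\<mu>) / (\<integral>\<^sup>+S. L S \<partial>\<mu>) < \<top>"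
    by (auto simp: ennreal_divide_eq_top_iff top_unique less_top[symmetric])
  then show ?thesis
    unfolding posterior_def L_def[symmetric] by (intro enn2real_mono divide_right_mono_ennreal BA)
qed

lemma to_zero_in_prob_dominated:
  assumes Z: "to_zero_in_prob M Z" and M: "\<And>n. prob_space (M n)"
    and meas: "\<And>n. Z n \<in> borel_measurable (M n)"
    and le: "eventually (\<lambda>n. \<forall>\<omega>\<in>space (M n). \<bar>Z' n \<omega>\<bar> \<le> \<bar>Z n \<omega>\<bar>) sequentially"
  shows "to_zero_in_prob M Z'"
  unfolding to_zero_in_prob_def
proof (intro allI impI)
  fix \<delta> :: real assume "0 < \<delta>"
  then have lim: "(\<lambda>n. measure (M n) {\<omega> \<in> space (M n). \<delta> < \<bar>Z n \<omega>\<bar>}) \<longlonglongrightarrow> 0"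
    using Z unfolding to_zero_in_prob_def by blast
  have "eventually (\<lambda>n. 0 \<le> measure (M n) {\<omega> \<in> space (M n). \<delta> < \<bar>Z' n \<omega>\<bar>}) sequentially"
    by simp
  moreover have "eventually (\<lambda>n. measure (M n) {\<omega> \<in> space (M n). \<delta> < \<bar>Z' n \<omega>\<bar>}
      \<le> measure (M n) {\<omega> \<in> space (M n). \<delta> < \<bar>Z n \<omega>\<bar>}) sequentially"
    using le
  proof eventually_elim
    case (elim n)
    interpret prob_space "M n" by (rule M)
    have "{\<omega> \<in> space (M n). \<delta> < \<bar>Z n \<omega>\<bar>} \<in> sets (M n)" using meas[of n] by measurable
    then show ?case using elim by (intro finite_measure_mono) force+
  qed
  ultimately show "(\<lambda>n. measure (M n) {\<omega> \<in> space (M n). \<delta> < \<bar>Z' n \<omega>\<bar>}) \<longlonglongrightarrow> 0"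
    by (rule tendsto_sandwich[OF _ _ tendsto_const lim])
qed

theorem lemma4:
  fixes p :: "nat \<Rightarrow> nat"
    and M :: "nat \<Rightarrow> 'a measure"
    and Y :: "nat \<Rightarrow> nat \<Rightarrow> 'a \<Rightarrow> (nat \<Rightarrow> real)"
    and \<Sigma>0 :: "nat \<Rightarrow> real Matrix.mat"
    and \<mu> :: "nat \<Rightarrow> (nat \<times> nat \<Rightarrow> real) measure"
    and \<epsilon> :: "nat \<Rightarrow> real"
    and k\<sigma> \<sigma>0 :: real
  assumes prob: "\<And>n. prob_space (M n)"
    and meas: "\<And>n i. i < n \<Longrightarrow> Y n i \<in> measurable (M n) (obs_space (p n))"
    and indep: "\<And>n. prob_space.indep_vars (M n) (\<lambda>_. obs_space (p n)) (Y n) {..<n}"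
    and ident: "\<And>n i. i < n \<Longrightarrow>
        distr (M n) (obs_space (p n)) (Y n i) = distr (M n) (obs_space (p n)) (Y n 0)"
    and mean0: "\<And>n i j. i < n \<Longrightarrow> j < p n \<Longrightarrow>
        integrable (M n) (\<lambda>\<omega>. Y n i \<omega> j) \<and> (\<integral>\<omega>. Y n i \<omega> j \<partial>M n) = 0"
    and Sigma0_carrier: "\<And>n. \<Sigma>0 n \<in> carrier_mat (p n) (p n)"
    and cov: "\<And>n i j l. i < n \<Longrightarrow> j < p n \<Longrightarrow> l < p n \<Longrightarrow>
        integrable (M n) (\<lambda>\<omega>. Y n i \<omega> j * Y n i \<omega> l) \<and>
        \<Sigma>0 n $$ (j, l) = (\<integral>\<omega>. Y n i \<omega> j * Y n i \<omega> l \<partial>M n)"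
    and k_pos: "0 < k\<sigma>" and k_le1: "k\<sigma> \<le> 1"
    and eig: "\<And>n ev. eigenvalue (\<Sigma>0 n) ev \<Longrightarrow> k\<sigma> \<le> ev \<and> ev \<le> 1 / k\<sigma>"
    and sigma0_pos: "0 < \<sigma>0"
    and subg: "\<And>n i. i < n \<Longrightarrow>
        subgauss_norm_le (p n) (M n) (\<lambda>\<omega>. inv_sqrt_mat (\<Sigma>0 n) *\<^sub>v to_vec (p n) (Y n i \<omega>)) \<sigma>0"
    and prior_prob: "\<And>n. prob_space (\<mu> n)"
    and prior_sets: "\<And>n. sets (\<mu> n) = sets (param_space (p n))"
    and prior_pd: "\<And>n. AE S in \<mu> n. pos_def_mat (to_mat (p n) S)"
    and eps_lim: "\<epsilon> \<longlonglongrightarrow> 0"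
    and contr_Sigma: "to_zero_in_prob M (\<lambda>n \<omega>. posterior (p n) n (\<mu> n) (\<lambda>i. Y n i \<omega>)
        {S \<in> space (param_space (p n)). spec_norm (to_mat (p n) S - \<Sigma>0 n) > \<epsilon> n})"
  shows "\<exists>C>0. to_zero_in_prob M (\<lambda>n \<omega>. posterior (p n) n (\<mu> n) (\<lambda>i. Y n i \<omega>)
        {S \<in> space (param_space (p n)).
           spec_norm (mat_inv (to_mat (p n) S) - mat_inv (\<Sigma>0 n)) > C * \<epsilon> n})"
proof -
  define C where "C = 2 / k\<sigma>\<^sup>2"
  define A where "A n = {S \<in> space (param_space (p n)). \<epsilon> n < spec_norm (to_mat (p n) S - \<Sigma>0 n)}" for n
  define B where "B n = {S \<in> space (param_space (p n)).
    C * \<epsilon> n < spec_norm (mat_inv (to_mat (p n) S) - mat_inv (\<Sigma>0 n))}" for n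
  have B_subset_A: "B n \<subseteq> A n" if n: "\<epsilon> n \<le> k\<sigma> / 2" "0 < n" for n
  proof -
    have "transpose_mat (\<Sigma>0 n) = \<Sigma>0 n"
      using Sigma0_carrier[of n] cov[OF n(2)] by (intro eq_matI) (auto simp: mult.commute)
    then have bound: "spec_norm (mat_inv (to_mat (p n) S) - mat_inv (\<Sigma>0 n)) \<le> C * \<epsilon> n"
      if "spec_norm (to_mat (p n) S - \<Sigma>0 n) \<le> \<epsilon> n" for S
      using spec_norm_mat_inv_diff_le_if_eigenvalues_ge[OF _ Sigma0_carrier _ k_pos _ that n(1)] eig
      by (simp add: C_def to_mat_def)
    show ?thesis
    proof
      fix S assume S: "S \<in> B n"
      then have "\<not> spec_norm (to_mat (p n) S - \<Sigma>0 n) \<le> \<epsilon> n"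
        using bound[of S] by (auto simp: B_def)
      then show "S \<in> A n" using S by (simp add: A_def B_def)
    qed
  qed
  have "eventually (\<lambda>n. \<epsilon> n < k\<sigma> / 2) sequentially"
    using order_tendstoD(2)[OF eps_lim, of "k\<sigma> / 2"] k_pos by simp
  then have dominated: "eventually (\<lambda>n. \<forall>\<omega>\<in>space (M n).
      \<bar>posterior (p n) n (\<mu> n) (\<lambda>i. Y n i \<omega>) (B n)\<bar> \<le> \<bar>posterior (p n) n (\<mu> n) (\<lambda>i. Y n i \<omega>) (A n)\<bar>)
      sequentially"
    using eventually_gt_at_top[of "0::nat"]
    by eventually_elim (simp add: posterior_nonneg posterior_mono B_subset_A)
  have lim: "to_zero_in_prob M (\<lambda>n \<omega>. posterior (p n) n (\<mu> n) (\<lambda>i. Y n i \<omega>) (A n))"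
    using contr_Sigma by (simp add: A_def)
  have measurable_A: "(\<lambda>\<omega>. posterior (p n) n (\<mu> n) (\<lambda>i. Y n i \<omega>) (A n)) \<in> borel_measurable (M n)" for n
    unfolding A_def by (intro borel_measurable_posterior meas prior_prob prior_sets sets_spec_norm_gt Sigma0_carrier)
  have "to_zero_in_prob M (\<lambda>n \<omega>. posterior (p n) n (\<mu> n) (\<lambda>i. Y n i \<omega>) (B n))"
    by (rule to_zero_in_prob_dominated[where M=M, OF lim prob measurable_A dominated])
  moreover have "0 < C" using k_pos by (simp add: C_def)
  ultimately show ?thesis unfolding B_def by blast
qed

end
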